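(* For every infinite discrete group $G$, the Bernoulli flow $2^G$ contains a free point whose orbit is dense.
   Context: The Bernoulli flow is $2^G=\{0,1\}^G$ with the product topology and the action $(g\cdot z)(h)=z(hg)$. A point $z$ is free if the map $g\mapsto g\cdot z$ is injective. *)

theory Defs
  imports "HOL-Algebra.Group" "HOL-Analysis.Function_Topology"
begin

text \<open>The Bernoulli flow 2^G: functions carrier G -> {0,1} (here bool), with the
  product of discrete topologies. Elements are extensional on carrier G.\<close>
definition bernoulli_space :: "('g, 'b) monoid_scheme \<Rightarrow> ('g \<Rightarrow> bool) topology" where
  "bernoulli_space G = product_topology (\<lambda>_. discrete_topology (UNIV :: bool set)) (carrier G)"

definition bernoulli_shift :: "('g, 'b) monoid_scheme \<Rightarrow> 'g \<Rightarrow> ('g \<Rightarrow> bool) \<Rightarrow> ('g \<Rightarrow> bool)" where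
  "bernoulli_shift G g z = (\<lambda>h\<in>carrier G. z (h \<otimes>\<^bsub>G\<^esub> g))"

definition free_point :: "('g, 'b) monoid_scheme \<Rightarrow> ('g \<Rightarrow> bool) \<Rightarrow> bool" where
  "free_point G z \<longleftrightarrow> inj_on (\<lambda>g. bernoulli_shift G g z) (carrier G)"

definition orbit :: "('g, 'b) monoid_scheme \<Rightarrow> ('g \<Rightarrow> bool) \<Rightarrow> ('g \<Rightarrow> bool) set" where
  "orbit G z = (\<lambda>g. bernoulli_shift G g z) ` carrier G"

end

theory Submission
  imports Defs "HOL-Algebra.Free_Abelian_Groups"  (* brings in HOL-Cardinals, for card_of_Fpow_infinite *)
begin

text \<open>
  A pattern is a pair of disjoint finite sets \<open>P, N \<subseteq> G\<close> (prescribed positions of 1s and 0s)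
  together with a side; there are only \<open>|G|\<close> patterns. Going through them along a cardinal
  well-order, place each pattern at a left or right translate that avoids all earlier placements:
  the earlier placements cover fewer than \<open>|G|\<close> points, and fewer than \<open>|G|\<close> translates
  of a finite set meet such a set. The point \<open>z\<close> equal to 1 exactly on the placed
  1-positions realises every pattern. Right-placed patterns put a translate of \<open>z\<close> into every
  basic open set, and the left-placed pattern \<open>1 \<mapsto> 0, a \<mapsto> 1\<close> gives \<open>z k \<noteq> z (k a)\<close>,
  which separates \<open>g \<cdot> z\<close> from \<open>g' \<cdot> z\<close> for \<open>a = g\<inverse> g'\<close>.
\<close>

unbundle cardinal_syntax

lemma card_of_UN_finite_ordLess_infinite:
  assumes "infinite C" and "|I| <o |C|" and "\<And>i. i \<in> I \<Longrightarrow> finite (S i)"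
  shows "|\<Union>i\<in>I. S i| <o |C|"
proof (cases "finite I")
  case True
  then show ?thesis using assms by simp
next
  case False
  have "|\<Union>i\<in>I. S i| \<le>o |I|"
    using assms(3) False by (intro card_of_UNION_ordLeq_infinite) (auto intro: ordLess_imp_ordLeq)
  then show ?thesis using assms(2) ordLeq_ordLess_trans by blast
qed

lemma exists_avoiding_small_set:
  assumes C: "infinite C" and F: "finite F" and U: "|U| <o |C|"
    and inj: "\<And>f. f \<in> F \<Longrightarrow> inj_on (\<lambda>g. \<phi> g f) C"
  shows "\<exists>g\<in>C. (\<lambda>f. \<phi> g f) ` F \<inter> U = {}"
proof -
  define Bad where "Bad = (\<Union>u\<in>U. \<Union>f\<in>F. (\<lambda>g. \<phi> g f) -` {u} \<inter> C)"
  have "|Bad| <o |C|"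
    unfolding Bad_def using C U F
    by (intro card_of_UN_finite_ordLess_infinite finite_UN_I finite_vimage_IntI) (simp_all add: inj)
  then have "\<not> C \<subseteq> Bad"
    using card_of_mono1 not_ordLess_ordLeq by blast
  then obtain g where "g \<in> C" "g \<notin> Bad" by blast
  then show ?thesis unfolding Bad_def by blast
qed

lemma exists_disjoint_family_choice:
  assumes C: "infinite C" and I: "|I| \<le>o |C|"
    and fin: "\<And>i g. i \<in> I \<Longrightarrow> finite (S i g)"
    and avoid: "\<And>i U. i \<in> I \<Longrightarrow> |U| <o |C| \<Longrightarrow> \<exists>g\<in>C. S i g \<inter> U = {}"
  shows "\<exists>A \<in> I \<rightarrow> C. disjoint_family_on (\<lambda>i. S i (A i)) I"
proof -
  \<comment> \<open>In the cardinal well-order of \<open>I\<close> every initial segment is smaller than \<open>|C|\<close>.\<close>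
  define r where "r = |I|"
  have wo: "wo_rel r" unfolding r_def wo_rel_def by (rule card_of_Well_order)
  define pick where
    "pick A i = (SOME g. g \<in> C \<and> S i g \<inter> (\<Union>j\<in>underS r i. S j (A j)) = {})" for A i
  define A where "A = wfrec (r - Id) pick"
  define before where "before i = (\<Union>j\<in>underS r i. S j (A j))" for i
  have A_eq: "A i = (SOME g. g \<in> C \<and> S i g \<inter> before i = {})" for i
  proof -
    have "A i = pick (cut A (r - Id) i) i" unfolding A_def by (rule wfrec[OF wo_rel.WF[OF wo]])
    moreover have "(\<Union>j\<in>underS r i. S j (cut A (r - Id) i j)) = before i"
      unfolding before_def by (intro SUP_cong refl) (auto simp: cut_apply underS_def)
    ultimately show ?thesis unfolding pick_def by simp
  qed
  have A: "A i \<in> C \<and> S i (A i) \<inter> before i = {}" if i: "i \<in> I" for i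
  proof -
    have "|underS r i| <o |I|"
      using card_of_underS[where r="|I|" and a=i] i by (simp add: r_def card_of_Card_order)
    then have "|underS r i| <o |C|" using I by (rule ordLess_ordLeq_trans)
    moreover have "underS r i \<subseteq> I" by (auto simp: r_def underS_def dest: FieldI1)
    ultimately have "|before i| <o |C|"
      unfolding before_def using C fin by (intro card_of_UN_finite_ordLess_infinite) auto
    then obtain g where "g \<in> C \<and> S i g \<inter> before i = {}" using avoid[OF i] by blast
    then show ?thesis unfolding A_eq by (rule someI)
  qed
  have "S i (A i) \<inter> S j (A j) = {}" if "i \<in> I" "j \<in> I" "i \<noteq> j" for i j
  proof -
    have "i \<in> underS r j \<or> j \<in> underS r i"
      using wo_rel.TOTALS[OF wo] that by (auto simp: r_def underS_def)
    then show ?thesis using A that unfolding before_def by blast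
  qed
  then have "disjoint_family_on (\<lambda>i. S i (A i)) I" by (simp add: disjoint_family_on_def)
  moreover have "A \<in> I \<rightarrow> C" using A by blast
  ultimately show ?thesis by blast
qed

definition translate :: "('g, 'b) monoid_scheme \<Rightarrow> bool \<Rightarrow> 'g \<Rightarrow> 'g \<Rightarrow> 'g" where
  "translate G right g h = (if right then h \<otimes>\<^bsub>G\<^esub> g else g \<otimes>\<^bsub>G\<^esub> h)"

definition realises :: "('g, 'b) monoid_scheme \<Rightarrow> ('g \<Rightarrow> bool) \<Rightarrow> bool \<Rightarrow> 'g set \<Rightarrow> 'g set \<Rightarrow> bool" where
  "realises G z right P N \<longleftrightarrow> (\<exists>g\<in>carrier G.
     (\<forall>h\<in>P. z (translate G right g h)) \<and> (\<forall>h\<in>N. \<not> z (translate G right g h)))"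

definition patterns :: "('g, 'b) monoid_scheme \<Rightarrow> ('g set \<times> 'g set \<times> bool) set" where
  "patterns G = Fpow (carrier G) \<times> Fpow (carrier G) \<times> UNIV"

definition placement :: "('g, 'b) monoid_scheme \<Rightarrow> 'g set \<times> 'g set \<times> bool \<Rightarrow> 'g \<Rightarrow> 'g set" where
  "placement G = (\<lambda>(P, N, right) g. translate G right g ` (P \<union> N))"

lemma card_of_patterns_ordLeq:
  assumes "infinite (carrier G)"
  shows "|patterns G| \<le>o |carrier G|"
proof -
  have Fpow: "|Fpow (carrier G)| \<le>o |carrier G|" using assms by (simp add: ordIso_imp_ordLeq)
  have bool: "|UNIV :: bool set| \<le>o |carrier G|" using assms by (simp add: ordLess_imp_ordLeq)
  show ?thesis
    unfolding patterns_def using assms Fpow bool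
    by (intro card_of_Times_ordLeq_infinite_Field) (auto simp: card_of_card_order_on)
qed

lemma dense_orbit_if_realises_right_patterns:
  assumes "\<And>P N. finite P \<Longrightarrow> finite N \<Longrightarrow> P \<subseteq> carrier G \<Longrightarrow> N \<subseteq> carrier G \<Longrightarrow> P \<inter> N = {}
             \<Longrightarrow> realises G z True P N"
  shows "bernoulli_space G closure_of orbit G z = topspace (bernoulli_space G)"
proof (rule antisym[OF closure_of_subset_topspace subsetI])
  fix x assume x: "x \<in> topspace (bernoulli_space G)"
  have "\<exists>y\<in>orbit G z. y \<in> T" if "x \<in> T" and T: "openin (bernoulli_space G) T" for T
  proof -
    obtain V where V: "finite {h \<in> carrier G. V h \<noteq> UNIV}"
      "x \<in> PiE (carrier G) V" "PiE (carrier G) V \<subseteq> T"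
      using T \<open>x \<in> T\<close>
      unfolding bernoulli_space_def openin_product_topology_alt topspace_discrete_topology by blast
    define F where "F = {h \<in> carrier G. V h \<noteq> UNIV}"
    have F: "finite F" "F \<subseteq> carrier G" using V(1) by (auto simp: F_def)
    have "realises G z True {h \<in> F. x h} {h \<in> F. \<not> x h}"
      by (rule assms) (use F in auto)
    then obtain g where g: "g \<in> carrier G"
      and agree: "\<And>h. h \<in> F \<Longrightarrow> z (h \<otimes>\<^bsub>G\<^esub> g) = x h"
      unfolding realises_def translate_def by auto
    have "bernoulli_shift G g z h \<in> V h" if "h \<in> carrier G" for h
    proof (cases "h \<in> F")
      case True
      then show ?thesis using agree V(2) that by (auto simp: bernoulli_shift_def)
    next
      case False
      then show ?thesis using that by (simp add: F_def)
    qed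
    then have "bernoulli_shift G g z \<in> PiE (carrier G) V" by (simp add: bernoulli_shift_def)
    then show ?thesis using g V(3) unfolding orbit_def by blast
  qed
  then show "x \<in> bernoulli_space G closure_of orbit G z" using x by (auto simp: in_closure_of)
qed

context group
begin

lemma translate_closed [simp]:
  "g \<in> carrier G \<Longrightarrow> h \<in> carrier G \<Longrightarrow> translate G right g h \<in> carrier G"
  by (simp add: translate_def)

lemma inj_on_translate: "g \<in> carrier G \<Longrightarrow> inj_on (translate G right g) (carrier G)"
  by (cases right) (simp_all add: translate_def[abs_def] inj_on_cmult inj_on_multc)

lemma inj_on_translates_of: "h \<in> carrier G \<Longrightarrow> inj_on (\<lambda>g. translate G right g h) (carrier G)"
  by (cases right) (simp_all add: translate_def inj_on_cmult inj_on_multc)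

lemma exists_disjoint_placements:
  assumes inf: "infinite (carrier G)"
  obtains A where "A \<in> patterns G \<rightarrow> carrier G"
    and "disjoint_family_on (\<lambda>p. placement G p (A p)) (patterns G)"
proof -
  have "\<exists>A \<in> patterns G \<rightarrow> carrier G. disjoint_family_on (\<lambda>p. placement G p (A p)) (patterns G)"
  proof (rule exists_disjoint_family_choice[OF inf card_of_patterns_ordLeq[OF inf]])
    show "finite (placement G p g)" if "p \<in> patterns G" for p g
      using that by (auto simp: patterns_def placement_def Fpow_def)
    show "\<exists>g\<in>carrier G. placement G p g \<inter> U = {}"
      if p_in: "p \<in> patterns G" and U: "|U| <o |carrier G|" for p U
    proof -
      obtain P N right where p: "p = (P, N, right)" "finite (P \<union> N)" "P \<union> N \<subseteq> carrier G"
        using p_in by (cases p) (auto simp: patterns_def Fpow_def)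
      have "\<exists>g\<in>carrier G. translate G right g ` (P \<union> N) \<inter> U = {}"
        using p(3) by (intro exists_avoiding_small_set[OF inf p(2) U] inj_on_translates_of) blast
      then show ?thesis by (simp add: p(1) placement_def)
    qed
  qed
  then show ?thesis using that by blast
qed

lemma exists_point_realising_all_patterns:
  assumes inf: "infinite (carrier G)"
  obtains z where "z \<in> topspace (bernoulli_space G)"
    and "\<And>right P N. finite P \<Longrightarrow> finite N \<Longrightarrow> P \<subseteq> carrier G \<Longrightarrow> N \<subseteq> carrier G \<Longrightarrow> P \<inter> N = {}
           \<Longrightarrow> realises G z right P N"
proof -
  let ?C = "carrier G"
  obtain A where A: "A \<in> patterns G \<rightarrow> ?C"
    and disj: "disjoint_family_on (\<lambda>p. placement G p (A p)) (patterns G)"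
    using exists_disjoint_placements[OF inf] by blast
  define z where
    "z = (\<lambda>w\<in>?C. \<exists>(P, N, right)\<in>patterns G. w \<in> translate G right (A (P, N, right)) ` P)"
  show ?thesis
  proof (rule that)
    show "z \<in> topspace (bernoulli_space G)" by (simp add: bernoulli_space_def z_def)
    show "realises G z right P N"
      if "finite P" "finite N" "P \<subseteq> ?C" "N \<subseteq> ?C" "P \<inter> N = {}" for right P N
    proof -
      let ?p = "(P, N, right)"
      let ?g = "A ?p"
      have p: "?p \<in> patterns G" using that by (simp add: patterns_def Fpow_def)
      then have g: "?g \<in> ?C" using A by blast
      have "z (translate G right ?g h)" if "h \<in> P" for h
        using p g that \<open>P \<subseteq> ?C\<close> by (auto simp: z_def)
      moreover have "\<not> z (translate G right ?g h)" if h: "h \<in> N" for h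
      proof
        assume "z (translate G right ?g h)"
        moreover have "translate G right ?g h \<in> ?C" using g h \<open>N \<subseteq> ?C\<close> by auto
        ultimately obtain P' N' right' h' where p': "(P', N', right') \<in> patterns G" and h': "h' \<in> P'"
          and eq: "translate G right ?g h = translate G right' (A (P', N', right')) h'"
          by (auto simp: z_def split: if_splits)
        then have "placement G ?p ?g \<inter> placement G (P', N', right') (A (P', N', right')) \<noteq> {}"
          using h by (auto simp: placement_def)
        then have "(P', N', right') = ?p" using disjoint_family_onD[OF disj p p'] by fastforce
        then have "h' \<in> P" "translate G right ?g h = translate G right ?g h'" using h' eq by simp_all
        then have "h = h'"
          using inj_onD[OF inj_on_translate[OF g]] h \<open>P \<subseteq> ?C\<close> \<open>N \<subseteq> ?C\<close> by blast
        then show False using h \<open>h' \<in> P\<close> \<open>P \<inter> N = {}\<close> by blast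
      qed
      ultimately show ?thesis unfolding realises_def using g by blast
    qed
  qed
qed

lemma free_point_if_realises_left_pairs:
  assumes "\<And>a. a \<in> carrier G \<Longrightarrow> a \<noteq> \<one> \<Longrightarrow> realises G z False {a} {\<one>}"
  shows "free_point G z"
  unfolding free_point_def
proof (rule inj_onI)
  fix g g' assume g: "g \<in> carrier G" "g' \<in> carrier G"
    and eq: "bernoulli_shift G g z = bernoulli_shift G g' z"
  show "g = g'"
  proof (rule ccontr)
    assume "g \<noteq> g'"
    define a where "a = inv g \<otimes> g'"
    have "g \<otimes> a = g'" using g by (simp add: a_def m_assoc[symmetric])
    then have "a \<in> carrier G" "a \<noteq> \<one>" using g \<open>g \<noteq> g'\<close> by (auto simp: a_def)
    then obtain k where k: "k \<in> carrier G" "z (k \<otimes> a)" "\<not> z k"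
      using assms by (auto simp: realises_def translate_def)
    let ?h = "k \<otimes> inv g"
    have "z k = z (?h \<otimes> g)" using k g by (simp add: m_assoc)
    also have "\<dots> = z (?h \<otimes> g')"
      using fun_cong[OF eq, of ?h] k g by (simp add: bernoulli_shift_def)
    also have "\<dots> = z (k \<otimes> a)" using k g by (simp add: m_assoc a_def)
    finally show False using k by simp
  qed
qed

end

theorem lemma2p3:
  fixes G :: "('g, 'b) monoid_scheme"
  assumes "group G" and "infinite (carrier G)"
  shows "\<exists>z \<in> topspace (bernoulli_space G).
           free_point G z \<and>
           (bernoulli_space G) closure_of (orbit G z) = topspace (bernoulli_space G)"
proof -
  interpret group G by (rule assms(1))
  obtain z where z: "z \<in> topspace (bernoulli_space G)"
    and realises: "\<And>right P N. finite P \<Longrightarrow> finite N \<Longrightarrow> P \<subseteq> carrier G \<Longrightarrow> N \<subseteq> carrier G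
                     \<Longrightarrow> P \<inter> N = {} \<Longrightarrow> realises G z right P N"
    by (rule exists_point_realising_all_patterns[OF assms(2)]) (rule that)
  have "free_point G z" by (rule free_point_if_realises_left_pairs, rule realises) auto
  moreover have "bernoulli_space G closure_of orbit G z = topspace (bernoulli_space G)"
    by (rule dense_orbit_if_realises_right_patterns) (rule realises)
  ultimately show ?thesis using z by blast
qed

end
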